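(* Let $\phi:[t_0,\infty)\rightarrow\mathbb{R}^N$ and let $\Omega(t)\in\mathbb{R}^{N\times N}$ solve $$\dot{\Omega}(t)=-\lambda_{\Omega}\Omega(t)+\lambda_{\Omega}\frac{\phi(t)\phi^T(t)}{1+\phi^T(t)\phi(t)},\qquad \Omega(t_0)=\Omega_0,$$ where $\lambda_\Omega>0$ and $\Omega_0$ is symmetric with $0\leq\Omega_0\leq I$. Then for any $\phi$: (1) $\Omega(t)\geq0$ for all $t\geq t_0$; (2) $\Omega(t)\leq I$ for all $t\geq t_0$. Suppose in addition that $\phi$ is bounded and there exist $t_1\geq t_0$ and $t_2>t_1$ such that $\int_{t_1}^{t_2}\phi(\tau)\phi^T(\tau)d\tau\geq\alpha I$ with $\alpha\geq\alpha_0$, where $$\alpha_0=\frac{k_{\Omega}d}{\kappa\Gamma_{max}\rho_{\Omega}\lambda_{\Omega}\exp(-\lambda_{\Omega}(t_2-t_1))},\qquad d=\max_{\tau\in[t_1,t_2]}\{1+\lVert\phi(\tau)\rVert^2\}.$$ Then (3) $\Omega(t)\geq\Omega_{FE}I>(1/(\kappa\Gamma_{max}))I$ for all $t\in[t_2,t_3]$, where $\Omega_{FE}=k_{\Omega}/(\kappa\Gamma_{max})$ and $t_3=t_2-(\ln\rho_{\Omega})/\lambda_{\Omega}$. If in addition $\phi$ is persistently exciting for all $t\geq t_1$, i.e. there are $T>0$ and $\alpha\geq\alpha_0'$ with $\int_t^{t+T}\phi(\tau)\phi^T(\tau)d\tau\geq\alpha I$ for all $t\geq t_1$, where $t_2'=t_1+T$,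 $d'=\max_{\tau\geq t_1}\{1+\lVert\phi(\tau)\rVert^2\}$ and $\alpha_0'=\alpha_0\exp(-\lambda_{\Omega}(t_2-t_2'))d'/d$, then (4) $\Omega(t)\geq\Omega_{FE}I>(1/(\kappa\Gamma_{max}))I$ for all $t\geq t_2'$.
   Context: $\lVert\cdot\rVert$ is the Euclidean 2-norm. For symmetric matrices, $A\leq B$ means $B-A$ is positive semidefinite. The constants are: $\kappa>0$ and $\Gamma_{max}>0$ with $\kappa>\Gamma_{max}^{-1}$, $\rho_{\Omega}\in(0,1)$, and $k_{\Omega}>1$. *)

theory Defs
  imports "HOL-Analysis.Analysis"
begin

definition outer_self :: "real ^ 'n \<Rightarrow> real ^ 'n ^ 'n" where
  "outer_self v = (\<chi> i j. v $ i * v $ j)"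

definition psd :: "real ^ 'n ^ 'n \<Rightarrow> bool" where
  "psd A \<longleftrightarrow> (\<forall>x. 0 \<le> x \<bullet> (A *v x))"

definition pd :: "real ^ 'n ^ 'n \<Rightarrow> bool" where
  "pd A \<longleftrightarrow> (\<forall>x. x \<noteq> 0 \<longrightarrow> 0 < x \<bullet> (A *v x))"

definition loewner_le :: "real ^ 'n ^ 'n \<Rightarrow> real ^ 'n ^ 'n \<Rightarrow> bool" where
  "loewner_le A B \<longleftrightarrow> psd (B - A)"

definition loewner_less :: "real ^ 'n ^ 'n \<Rightarrow> real ^ 'n ^ 'n \<Rightarrow> bool" where
  "loewner_less A B \<longleftrightarrow> pd (B - A)"

end

(*
  For a fixed vector x the quadratic form q(t) = x' Omega(t) x solves the scalar equation
  q' = -lam q + lam (x' phi)^2 / (1 + |phi|^2), whose forcing term lies between 0 and |x|^2.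
  By variation of constants exp(lam t) q(t) is nondecreasing, which gives Omega >= 0; the same
  argument for |x|^2 - q gives Omega <= I.  Over an excitation window [s, e] on which
  1 + |phi|^2 <= D, the increase of exp(lam t) q(t) is at least
  exp(lam s) lam / D * integral (x' phi)^2 >= exp(lam s) lam gamma |x|^2 / D,
  so q(t) >= exp(-lam (t - s)) lam gamma |x|^2 / D for t >= e.  The thresholds alpha0 and alpha0'
  are exactly what makes this decayed bound reach k / (kappa Gamma_max): on [t2, t3] for the
  window [t1, t2], and for every t >= t1 + T for the window [t - T, t].
*)

theory Submission
  imports Defs
begin

lemma quadratic_form_outer_self: "x \<bullet> (outer_self v *v x) = (x \<bullet> v)\<^sup>2"
  by (simp add: outer_self_def inner_vec_def matrix_vector_mult_def power2_eq_square
      sum_distrib_left sum_distrib_right mult.commute mult.left_commute inner_commute)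

lemma quadratic_form_scaleR_mat_1: "(x::real^'n) \<bullet> ((c *\<^sub>R mat 1) *v x) = c * (x \<bullet> x)"
  by (simp flip: scaleR_matrix_vector_assoc)

lemma bounded_linear_quadratic_form: "bounded_linear (\<lambda>M::real^'n^'n. x \<bullet> (M *v x))"
proof -
  have "linear (\<lambda>M::real^'n^'n. x \<bullet> (M *v x))"
    by (rule linearI) (simp_all add: matrix_vector_mult_add_rdistrib inner_add_right
         flip: scaleR_matrix_vector_assoc)
  then show ?thesis
    by (simp add: linear_conv_bounded_linear)
qed

lemma loewner_le_iff_quadratic_form:
  "loewner_le A B \<longleftrightarrow> (\<forall>x. x \<bullet> (A *v x) \<le> x \<bullet> (B *v x))"
  by (simp add: loewner_le_def psd_def matrix_vector_mult_diff_rdistrib inner_diff_right)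

lemma loewner_le_trans: "loewner_le A B \<Longrightarrow> loewner_le B C \<Longrightarrow> loewner_le A C"
  by (meson loewner_le_iff_quadratic_form order_trans)

lemma loewner_le_scaleR_mat_1:
  "c \<le> c' \<Longrightarrow> loewner_le (c *\<^sub>R mat 1) (c' *\<^sub>R mat 1)"
  by (simp add: loewner_le_iff_quadratic_form quadratic_form_scaleR_mat_1 mult_right_mono)

lemma loewner_less_scaleR_mat_1:
  assumes "c < c'"
  shows "loewner_less (c *\<^sub>R mat 1) (c' *\<^sub>R (mat 1 :: real^'n^'n))"
  unfolding loewner_less_def pd_def
proof (intro allI impI)
  fix x :: "real^'n"
  assume "x \<noteq> 0"
  have "x \<bullet> ((c' *\<^sub>R mat 1 - c *\<^sub>R mat 1) *v x) = (c' - c) * (x \<bullet> x)"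
    by (simp add: matrix_vector_mult_diff_rdistrib inner_diff_right quadratic_form_scaleR_mat_1
        algebra_simps)
  then show "0 < x \<bullet> ((c' *\<^sub>R mat 1 - c *\<^sub>R mat 1) *v x)"
    using assms \<open>x \<noteq> 0\<close> by simp
qed

lemma integrable_if_loewner_le_integral:
  fixes f :: "real \<Rightarrow> real^'n^'n"
  assumes "0 < \<gamma>" "loewner_le (\<gamma> *\<^sub>R mat 1) (integral S f)"
  shows "f integrable_on S"
proof (rule ccontr)
  assume "\<not> f integrable_on S"
  then have "loewner_le (\<gamma> *\<^sub>R mat 1) (0::real^'n^'n)"
    \<comment> \<open>the integral of a non-integrable function is 0\<close>
    using assms(2) by (simp add: not_integrable_integral)
  then have "\<gamma> * (x \<bullet> x) \<le> 0" for x :: "real^'n"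
    by (simp add: loewner_le_iff_quadratic_form quadratic_form_scaleR_mat_1)
  from this[of "axis undefined 1"] show False
    using assms(1) by (simp add: inner_axis_axis)
qed

lemma quadratic_form_has_integral:
  fixes f :: "real \<Rightarrow> real^'n^'n"
  assumes "f integrable_on S"
  shows "((\<lambda>\<tau>. x \<bullet> (f \<tau> *v x)) has_integral x \<bullet> (integral S f *v x)) S"
  using has_integral_linear[OF integrable_integral[OF assms] bounded_linear_quadratic_form]
  by (simp add: o_def)

lemma le_SUP_one_plus_norm_sq:
  fixes f :: "'b \<Rightarrow> 'a::real_normed_vector"
  assumes "bounded (f ` A)" "S \<subseteq> A" "\<tau> \<in> S"
  shows "1 + (norm (f \<tau>))\<^sup>2 \<le> (SUP \<tau>\<in>S. 1 + (norm (f \<tau>))\<^sup>2)"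
proof (rule cSUP_upper[OF assms(3)])
  obtain B where "\<forall>\<tau>\<in>A. norm (f \<tau>) \<le> B"
    using assms(1) by (auto simp: bounded_iff)
  then have "1 + (norm (f \<tau>))\<^sup>2 \<le> 1 + B\<^sup>2" if "\<tau> \<in> S" for \<tau>
    using assms(2) that by (auto intro!: power_mono)
  then show "bdd_above ((\<lambda>\<tau>. 1 + (norm (f \<tau>))\<^sup>2) ` S)"
    by (rule bdd_aboveI2)
qed

lemma linear_ode_variation_of_constants:
  fixes h f :: "real \<Rightarrow> real"
  assumes "a \<le> b"
    and deriv: "\<And>t. t \<in> {a..b} \<Longrightarrow>
      (h has_vector_derivative (- lam * h t + f t)) (at t within {a..b})"
  shows "((\<lambda>\<tau>. exp (lam * \<tau>) * f \<tau>) has_integral exp (lam * b) * h b - exp (lam * a) * h a) {a..b}"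
proof (rule fundamental_theorem_of_calculus[OF \<open>a \<le> b\<close>])
  fix t assume t: "t \<in> {a..b}"
  have "(h has_real_derivative (- lam * h t + f t)) (at t within {a..b})"
    using deriv[OF t] by (simp add: has_real_derivative_iff_has_vector_derivative)
  then have "((\<lambda>\<tau>. exp (lam * \<tau>) * h \<tau>) has_real_derivative
      exp (lam * t) * lam * h t + exp (lam * t) * (- lam * h t + f t)) (at t within {a..b})"
    by (auto intro!: derivative_eq_intros)
  then show "((\<lambda>\<tau>. exp (lam * \<tau>) * h \<tau>) has_vector_derivative exp (lam * t) * f t)
      (at t within {a..b})"
    by (simp add: has_real_derivative_iff_has_vector_derivative algebra_simps)
qed

lemma linear_ode_exp_mono:
  fixes h f :: "real \<Rightarrow> real"
  assumes "a \<le> b" "0 \<le> lam"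
    and "\<And>t. t \<in> {a..b} \<Longrightarrow>
      (h has_vector_derivative (- lam * h t + lam * f t)) (at t within {a..b})"
    and "\<And>t. t \<in> {a..b} \<Longrightarrow> 0 \<le> f t"
  shows "exp (lam * a) * h a \<le> exp (lam * b) * h b"
  using has_integral_nonneg[OF linear_ode_variation_of_constants[OF assms(1,3)]] assms(2,4)
  by fastforce

lemma linear_ode_nonneg:
  fixes h f :: "real \<Rightarrow> real"
  assumes "a \<le> b" "0 \<le> lam" "0 \<le> h a"
    and "\<And>t. t \<in> {a..b} \<Longrightarrow>
      (h has_vector_derivative (- lam * h t + lam * f t)) (at t within {a..b})"
    and "\<And>t. t \<in> {a..b} \<Longrightarrow> 0 \<le> f t"
  shows "0 \<le> h b"
proof -
  have "0 \<le> exp (lam * b) * h b"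
    using linear_ode_exp_mono[OF assms(1,2,4,5)] assms(3)
    by (meson exp_ge_zero mult_nonneg_nonneg order_trans)
  then show ?thesis
    by (simp add: zero_le_mult_iff)
qed

lemma normalized_square_nonneg: "0 \<le> (x \<bullet> v)\<^sup>2 / (1 + v \<bullet> (v::'a::real_inner))"
  by (simp add: add_nonneg_nonneg)

lemma normalized_square_le: "(x \<bullet> v)\<^sup>2 / (1 + v \<bullet> v) \<le> x \<bullet> (x::'a::real_inner)"
proof -
  have "(x \<bullet> v)\<^sup>2 \<le> (x \<bullet> x) * (v \<bullet> v)"
    by (rule Cauchy_Schwarz_ineq)
  also have "\<dots> \<le> (x \<bullet> x) * (1 + v \<bullet> v)"
    by (simp add: mult_left_mono)
  finally show ?thesis
    by (simp add: divide_le_eq add_pos_nonneg)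
qed

lemma one_le_SUP_one_plus_norm_sq:
  fixes f :: "'b \<Rightarrow> 'a::real_normed_vector"
  assumes "bounded (f ` A)" "S \<subseteq> A" "S \<noteq> {}"
  shows "1 \<le> (SUP \<tau>\<in>S. 1 + (norm (f \<tau>))\<^sup>2)"
proof -
  obtain \<tau> where "\<tau> \<in> S"
    using assms(3) by blast
  have "1 \<le> 1 + (norm (f \<tau>))\<^sup>2"
    by simp
  also have "\<dots> \<le> (SUP \<tau>\<in>S. 1 + (norm (f \<tau>))\<^sup>2)"
    using le_SUP_one_plus_norm_sq[OF assms(1,2) \<open>\<tau> \<in> S\<close>] .
  finally show ?thesis .
qed

lemma threshold_le_decayed_excitation:
  fixes lam \<rho> c d \<alpha> t1 t2 t :: real
  assumes "0 < lam" "0 < \<rho>" "0 < c" "0 < d"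
    and \<alpha>: "c * d / (\<rho> * lam * exp (- lam * (t2 - t1))) \<le> \<alpha>"
    and t: "t \<le> t2 - ln \<rho> / lam"
  shows "c \<le> exp (lam * (t1 - t)) * lam * \<alpha> / d"
proof -
  define E where "E = exp (- lam * (t2 - t1))"
  have "0 < \<rho> * lam * E"
    using assms(1,2) by (simp add: E_def)
  moreover have cd_le: "c * d \<le> \<alpha> * (\<rho> * lam * E)"
    using \<alpha> \<open>0 < \<rho> * lam * E\<close> by (simp add: E_def pos_divide_le_eq)
  moreover have "0 < c * d"
    using assms(3,4) by simp
  ultimately have "0 \<le> \<alpha>"
    by (smt (verit) zero_less_mult_iff)
  from cd_le have c_le: "c \<le> \<rho> * E * lam * \<alpha> / d"
    using assms(4) by (simp add: pos_le_divide_eq ac_simps)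
  have "ln \<rho> \<le> lam * (t2 - t)"
    using t assms(1) by (simp add: field_simps)
  then have "\<rho> \<le> exp (lam * (t2 - t))"
    using assms(2) by (metis exp_le_cancel_iff exp_ln)
  with \<open>0 \<le> \<alpha>\<close> have "\<rho> * E * lam * \<alpha> / d \<le> exp (lam * (t2 - t)) * E * lam * \<alpha> / d"
    using assms(1,4) by (intro divide_right_mono mult_right_mono) (auto simp: E_def)
  also have "exp (lam * (t2 - t)) * E = exp (lam * (t1 - t))"
    by (simp add: E_def flip: exp_add) (simp add: algebra_simps)
  finally show ?thesis
    using c_le by simp
qed

lemma threshold_le_decayed_persistent_excitation:
  fixes lam \<rho> c d \<beta> T :: real
  assumes "0 < lam" "0 < \<rho>" "\<rho> \<le> 1" "0 < c" "0 < d"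
    and \<beta>: "c * d * exp (lam * T) / (\<rho> * lam) \<le> \<beta>"
  shows "c \<le> exp (- (lam * T)) * lam * \<beta> / d"
proof -
  have le: "c * d * exp (lam * T) \<le> \<beta> * (\<rho> * lam)"
    using \<beta> assms(1,2) by (simp add: pos_divide_le_eq)
  moreover have "0 < c * d * exp (lam * T)"
    using assms(4,5) by simp
  ultimately have "0 < \<beta>"
    using assms(1,2) by (smt (verit) zero_less_mult_iff)
  then have "\<beta> * (\<rho> * lam) \<le> \<beta> * lam"
    using assms(1,3) by (intro mult_left_mono) auto
  with le have "c * d \<le> exp (- (lam * T)) * lam * \<beta>"
    by (simp add: exp_minus field_simps)
  then show ?thesis
    using assms(5) by (simp add: pos_le_divide_eq)
qed

locale regressor_filter =
  fixes \<phi> :: "real \<Rightarrow> real ^ 'n" and \<Omega> :: "real \<Rightarrow> real ^ 'n ^ 'n" and lam t0 :: real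
  assumes lam_pos: "0 < lam"
    and Omega_has_derivative: "\<And>t. t \<ge> t0 \<Longrightarrow>
      (\<Omega> has_vector_derivative
        (- lam *\<^sub>R \<Omega> t + lam *\<^sub>R ((1 / (1 + \<phi> t \<bullet> \<phi> t)) *\<^sub>R outer_self (\<phi> t))))
      (at t within {t0..})"
begin

lemma quadratic_form_Omega_has_derivative:
  assumes "t0 \<le> a" "t \<in> {a..b}"
  shows "((\<lambda>t. x \<bullet> (\<Omega> t *v x)) has_vector_derivative
      (- lam * (x \<bullet> (\<Omega> t *v x)) + lam * ((x \<bullet> \<phi> t)\<^sup>2 / (1 + \<phi> t \<bullet> \<phi> t))))
    (at t within {a..b})"
proof -
  have "x \<bullet> ((- lam *\<^sub>R \<Omega> t + lam *\<^sub>R ((1 / (1 + \<phi> t \<bullet> \<phi> t)) *\<^sub>R outer_self (\<phi> t))) *v x)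
      = - lam * (x \<bullet> (\<Omega> t *v x)) + lam * ((x \<bullet> \<phi> t)\<^sup>2 / (1 + \<phi> t \<bullet> \<phi> t))"
    by (simp only: matrix_vector_mult_add_rdistrib inner_add_right flip: scaleR_matrix_vector_assoc)
      (simp add: quadratic_form_outer_self)
  moreover have "(\<Omega> has_vector_derivative
      (- lam *\<^sub>R \<Omega> t + lam *\<^sub>R ((1 / (1 + \<phi> t \<bullet> \<phi> t)) *\<^sub>R outer_self (\<phi> t))))
      (at t within {a..b})"
    using assms by (intro has_vector_derivative_within_subset[OF Omega_has_derivative]) auto
  ultimately show ?thesis
    using bounded_linear.has_vector_derivative[OF bounded_linear_quadratic_form] by metis
qed

lemma exp_quadratic_form_Omega_mono:
  assumes "t0 \<le> a" "a \<le> b"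
  shows "exp (lam * a) * (x \<bullet> (\<Omega> a *v x)) \<le> exp (lam * b) * (x \<bullet> (\<Omega> b *v x))"
  using assms(2) less_imp_le[OF lam_pos] quadratic_form_Omega_has_derivative[OF assms(1)]
  by (rule linear_ode_exp_mono[where h = "\<lambda>t. x \<bullet> (\<Omega> t *v x)"
        and f = "\<lambda>t. (x \<bullet> \<phi> t)\<^sup>2 / (1 + \<phi> t \<bullet> \<phi> t)"])
    (simp_all add: normalized_square_nonneg)

lemma Omega_psd:
  assumes "loewner_le 0 (\<Omega> t0)" "t0 \<le> t"
  shows "loewner_le 0 (\<Omega> t)"
proof -
  have "0 \<le> x \<bullet> (\<Omega> t *v x)" for x
    using assms(2) less_imp_le[OF lam_pos] _ quadratic_form_Omega_has_derivative[OF order_refl]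
  proof (rule linear_ode_nonneg[where h = "\<lambda>t. x \<bullet> (\<Omega> t *v x)"
        and f = "\<lambda>t. (x \<bullet> \<phi> t)\<^sup>2 / (1 + \<phi> t \<bullet> \<phi> t)"])
    show "0 \<le> x \<bullet> (\<Omega> t0 *v x)"
      using assms(1) by (simp add: loewner_le_iff_quadratic_form)
  qed (simp_all add: normalized_square_nonneg)
  then show ?thesis
    by (simp add: loewner_le_iff_quadratic_form)
qed

lemma Omega_le_mat_1:
  assumes "loewner_le (\<Omega> t0) (mat 1)" "t0 \<le> t"
  shows "loewner_le (\<Omega> t) (mat 1)"
proof -
  have "0 \<le> x \<bullet> x - x \<bullet> (\<Omega> t *v x)" for x
    using assms(2) less_imp_le[OF lam_pos]
  proof (rule linear_ode_nonneg[where h = "\<lambda>t. x \<bullet> x - x \<bullet> (\<Omega> t *v x)"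
        and f = "\<lambda>t. x \<bullet> x - (x \<bullet> \<phi> t)\<^sup>2 / (1 + \<phi> t \<bullet> \<phi> t)"])
    show "0 \<le> x \<bullet> x - x \<bullet> (\<Omega> t0 *v x)"
      using assms(1) by (simp add: loewner_le_iff_quadratic_form)
    show "0 \<le> x \<bullet> x - (x \<bullet> \<phi> s)\<^sup>2 / (1 + \<phi> s \<bullet> \<phi> s)" for s
      using normalized_square_le by simp
    show "((\<lambda>t. x \<bullet> x - x \<bullet> (\<Omega> t *v x)) has_vector_derivative
        - lam * (x \<bullet> x - x \<bullet> (\<Omega> s *v x)) + lam * (x \<bullet> x - (x \<bullet> \<phi> s)\<^sup>2 / (1 + \<phi> s \<bullet> \<phi> s)))
        (at s within {t0..t})" if "s \<in> {t0..t}" for s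
      using has_vector_derivative_diff[OF has_vector_derivative_const
          quadratic_form_Omega_has_derivative[OF order_refl that]]
      by (simp add: algebra_simps)
  qed
  then show ?thesis
    by (simp add: loewner_le_iff_quadratic_form)
qed

lemma exp_quadratic_form_Omega_increment_ge:
  assumes "t0 \<le> s" "s \<le> e"
    and D: "\<forall>\<tau>\<in>{s..e}. 1 + (norm (\<phi> \<tau>))\<^sup>2 \<le> D"
    and J: "((\<lambda>\<tau>. (x \<bullet> \<phi> \<tau>)\<^sup>2) has_integral J) {s..e}"
  shows "exp (lam * s) * lam / D * J
    \<le> exp (lam * e) * (x \<bullet> (\<Omega> e *v x)) - exp (lam * s) * (x \<bullet> (\<Omega> s *v x))"
proof (rule has_integral_le[OF has_integral_mult_right[OF J]
      linear_ode_variation_of_constants[OF assms(2) quadratic_form_Omega_has_derivative[OF assms(1)]]])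
  fix \<tau> assume \<tau>: "\<tau> \<in> {s..e}"
  have D_pos: "0 < 1 + \<phi> \<tau> \<bullet> \<phi> \<tau>" "1 + \<phi> \<tau> \<bullet> \<phi> \<tau> \<le> D"
    using D \<tau> by (auto simp: dot_square_norm add_pos_nonneg)
  then have "(x \<bullet> \<phi> \<tau>)\<^sup>2 / D \<le> (x \<bullet> \<phi> \<tau>)\<^sup>2 / (1 + \<phi> \<tau> \<bullet> \<phi> \<tau>)"
    by (intro divide_left_mono) auto
  moreover have "exp (lam * s) \<le> exp (lam * \<tau>)"
    using \<tau> lam_pos by simp
  ultimately have "exp (lam * s) * (lam * ((x \<bullet> \<phi> \<tau>)\<^sup>2 / D))
      \<le> exp (lam * \<tau>) * (lam * ((x \<bullet> \<phi> \<tau>)\<^sup>2 / (1 + \<phi> \<tau> \<bullet> \<phi> \<tau>)))"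
    using lam_pos D_pos by (intro mult_mono mult_left_mono) (auto simp: normalized_square_nonneg)
  then show "exp (lam * s) * lam / D * (x \<bullet> \<phi> \<tau>)\<^sup>2
      \<le> exp (lam * \<tau>) * (lam * ((x \<bullet> \<phi> \<tau>)\<^sup>2 / (1 + \<phi> \<tau> \<bullet> \<phi> \<tau>)))"
    by simp
qed

lemma Omega_ge_excitation:
  assumes psd0: "loewner_le 0 (\<Omega> t0)"
    and "t0 \<le> s" "s \<le> e" "e \<le> t"
    and D: "\<forall>\<tau>\<in>{s..e}. 1 + (norm (\<phi> \<tau>))\<^sup>2 \<le> D"
    and excitation: "loewner_le (\<gamma> *\<^sub>R mat 1) (integral {s..e} (\<lambda>\<tau>. outer_self (\<phi> \<tau>)))"
  shows "loewner_le ((exp (lam * (s - t)) * lam * \<gamma> / D) *\<^sub>R mat 1) (\<Omega> t)"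
proof -
  have "1 \<le> D"
    using D \<open>s \<le> e\<close> by (smt (verit) atLeastAtMost_iff zero_le_power2)
  have "exp (lam * (s - t)) * lam * \<gamma> / D * (x \<bullet> x) \<le> x \<bullet> (\<Omega> t *v x)" for x
  proof (cases "0 < \<gamma>")
    case False
    then have "exp (lam * (s - t)) * lam * \<gamma> / D * (x \<bullet> x) \<le> 0"
      using \<open>1 \<le> D\<close> lam_pos
      by (intro mult_nonpos_nonneg divide_nonpos_pos mult_nonneg_nonpos) auto
    also have "0 \<le> x \<bullet> (\<Omega> t *v x)"
      using Omega_psd[OF psd0] assms(2-4) by (simp add: loewner_le_iff_quadratic_form)
    finally show ?thesis .
  next
    case True
    define I where "I = integral {s..e} (\<lambda>\<tau>. outer_self (\<phi> \<tau>))"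
    have "\<gamma> * (x \<bullet> x) \<le> x \<bullet> (I *v x)"
      using excitation unfolding I_def
      by (simp add: loewner_le_iff_quadratic_form quadratic_form_scaleR_mat_1)
    moreover have "((\<lambda>\<tau>. (x \<bullet> \<phi> \<tau>)\<^sup>2) has_integral x \<bullet> (I *v x)) {s..e}"
      using quadratic_form_has_integral[OF integrable_if_loewner_le_integral[OF True excitation]]
      by (simp add: I_def quadratic_form_outer_self)
    ultimately have "exp (lam * s) * lam / D * (\<gamma> * (x \<bullet> x))
        \<le> exp (lam * e) * (x \<bullet> (\<Omega> e *v x)) - exp (lam * s) * (x \<bullet> (\<Omega> s *v x))"
      using exp_quadratic_form_Omega_increment_ge[OF assms(2,3) D] lam_pos \<open>1 \<le> D\<close>
      by (meson divide_nonneg_nonneg exp_ge_zero less_imp_le mult_left_mono mult_nonneg_nonneg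
          order_trans zero_le_one)
    also have "\<dots> \<le> exp (lam * e) * (x \<bullet> (\<Omega> e *v x))"
      using Omega_psd[OF psd0 \<open>t0 \<le> s\<close>] by (simp add: loewner_le_iff_quadratic_form)
    also have "\<dots> \<le> exp (lam * t) * (x \<bullet> (\<Omega> t *v x))"
      using assms(2-4) by (intro exp_quadratic_form_Omega_mono) auto
    finally have "exp (lam * s) * lam / D * (\<gamma> * (x \<bullet> x)) / exp (lam * t) \<le> x \<bullet> (\<Omega> t *v x)"
      by (metis exp_gt_zero mult.commute pos_divide_le_eq)
    moreover have "exp (lam * (s - t)) * lam * \<gamma> / D * (x \<bullet> x)
        = exp (lam * s) * lam / D * (\<gamma> * (x \<bullet> x)) / exp (lam * t)"
      by (simp add: exp_diff right_diff_distrib ac_simps)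
    ultimately show ?thesis
      by simp
  qed
  then show ?thesis
    by (simp add: loewner_le_iff_quadratic_form quadratic_form_scaleR_mat_1)
qed

lemma Omega_ge_after_excitation:
  assumes psd0: "loewner_le 0 (\<Omega> t0)"
    and bounded: "bounded (\<phi> ` {t0..})"
    and "t0 \<le> t1" "t1 < t2" "0 < c" "0 < \<rho>"
    and \<alpha>: "c * (SUP \<tau>\<in>{t1..t2}. 1 + (norm (\<phi> \<tau>))\<^sup>2) / (\<rho> * lam * exp (- lam * (t2 - t1))) \<le> \<alpha>"
    and excitation: "loewner_le (\<alpha> *\<^sub>R mat 1) (integral {t1..t2} (\<lambda>\<tau>. outer_self (\<phi> \<tau>)))"
    and "t2 \<le> t" "t \<le> t2 - ln \<rho> / lam"
  shows "loewner_le (c *\<^sub>R mat 1) (\<Omega> t)"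
proof -
  define d where "d = (SUP \<tau>\<in>{t1..t2}. 1 + (norm (\<phi> \<tau>))\<^sup>2)"
  have window: "{t1..t2} \<subseteq> {t0..}"
    using \<open>t0 \<le> t1\<close> by auto
  have "1 \<le> d"
    unfolding d_def using one_le_SUP_one_plus_norm_sq[OF bounded window] \<open>t1 < t2\<close> by simp
  have "c \<le> exp (lam * (t1 - t)) * lam * \<alpha> / d"
    using threshold_le_decayed_excitation[OF lam_pos assms(6,5) _ \<alpha>[folded d_def] assms(10)] \<open>1 \<le> d\<close>
    by simp
  moreover have "\<forall>\<tau>\<in>{t1..t2}. 1 + (norm (\<phi> \<tau>))\<^sup>2 \<le> d"
    unfolding d_def using le_SUP_one_plus_norm_sq[OF bounded window] by blast
  ultimately show ?thesis
    using assms(3,4,9)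
    by (intro loewner_le_trans[OF loewner_le_scaleR_mat_1 Omega_ge_excitation[OF psd0 _ _ _ _ excitation]])
      auto
qed

lemma Omega_ge_persistent_excitation:
  assumes psd0: "loewner_le 0 (\<Omega> t0)"
    and bounded: "bounded (\<phi> ` {t0..})"
    and "t0 \<le> t1" "0 < T" "0 < c" "0 < \<rho>" "\<rho> \<le> 1"
    and \<beta>: "c * (SUP \<tau>\<in>{t1..}. 1 + (norm (\<phi> \<tau>))\<^sup>2) * exp (lam * T) / (\<rho> * lam) \<le> \<beta>"
    and excitation: "\<forall>s\<ge>t1. loewner_le (\<beta> *\<^sub>R mat 1) (integral {s..s + T} (\<lambda>\<tau>. outer_self (\<phi> \<tau>)))"
    and "t1 + T \<le> t"
  shows "loewner_le (c *\<^sub>R mat 1) (\<Omega> t)"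
proof -
  define d where "d = (SUP \<tau>\<in>{t1..}. 1 + (norm (\<phi> \<tau>))\<^sup>2)"
  have window: "{t1..} \<subseteq> {t0..}"
    using \<open>t0 \<le> t1\<close> by auto
  have "1 \<le> d"
    unfolding d_def using one_le_SUP_one_plus_norm_sq[OF bounded window] by simp
  have "c \<le> exp (lam * ((t - T) - t)) * lam * \<beta> / d"
    using threshold_le_decayed_persistent_excitation[OF lam_pos assms(6,7,5) _ \<beta>[folded d_def]]
      \<open>1 \<le> d\<close>
    by simp
  moreover have "\<forall>\<tau>\<in>{t - T..t}. 1 + (norm (\<phi> \<tau>))\<^sup>2 \<le> d"
    unfolding d_def using le_SUP_one_plus_norm_sq[OF bounded window] \<open>t1 + T \<le> t\<close> by auto
  moreover have "loewner_le (\<beta> *\<^sub>R mat 1) (integral {t - T..t} (\<lambda>\<tau>. outer_self (\<phi> \<tau>)))"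
    using excitation \<open>t1 + T \<le> t\<close> by (metis diff_add_cancel le_diff_eq)
  ultimately show ?thesis
    using assms(3,4,10)
    by (intro loewner_le_trans[OF loewner_le_scaleR_mat_1 Omega_ge_excitation[OF psd0]]) auto
qed

end

theorem lemma6:
  fixes \<phi> :: "real \<Rightarrow> real ^ 'n"
    and \<Omega> :: "real \<Rightarrow> real ^ 'n ^ 'n"
    and t0 lam \<kappa> \<Gamma>max \<rho> k :: real
  assumes kappa_Gamma: "\<kappa> > 0" "\<Gamma>max > 0" "\<kappa> > 1 / \<Gamma>max"
    and rho: "0 < \<rho>" "\<rho> < 1"
    and k: "k > 1"
    and lam: "lam > 0"
    and ode: "\<And>t. t \<ge> t0 \<Longrightarrow>
       (\<Omega> has_vector_derivative
          (- lam *\<^sub>R \<Omega> t + lam *\<^sub>R ((1 / (1 + \<phi> t \<bullet> \<phi> t)) *\<^sub>R outer_self (\<phi> t))))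
        (at t within {t0..})"
    and sym0: "transpose (\<Omega> t0) = \<Omega> t0"
    and psd0: "loewner_le 0 (\<Omega> t0)"
    and leI0: "loewner_le (\<Omega> t0) (mat 1)"
  shows
    "(\<forall>t\<ge>t0. loewner_le 0 (\<Omega> t))
   \<and> (\<forall>t\<ge>t0. loewner_le (\<Omega> t) (mat 1))
   \<and> (\<forall>t1 t2 \<alpha>.
        let d = (SUP \<tau>\<in>{t1..t2}. 1 + (norm (\<phi> \<tau>))\<^sup>2);
            \<alpha>0 = k * d / (\<kappa> * \<Gamma>max * \<rho> * lam * exp (- lam * (t2 - t1)));
            \<Omega>FE = k / (\<kappa> * \<Gamma>max);
            t3 = t2 - ln \<rho> / lam
        in (bounded (\<phi> ` {t0..}) \<and> t0 \<le> t1 \<and> t1 < t2 \<and> \<alpha> \<ge> \<alpha>0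
            \<and> loewner_le (\<alpha> *\<^sub>R mat 1) (integral {t1..t2} (\<lambda>\<tau>. outer_self (\<phi> \<tau>))))
           \<longrightarrow> (\<forall>t\<in>{t2..t3}. loewner_le (\<Omega>FE *\<^sub>R mat 1) (\<Omega> t)
                 \<and> loewner_less ((1 / (\<kappa> * \<Gamma>max)) *\<^sub>R mat 1) (\<Omega>FE *\<^sub>R mat 1)))
   \<and> (\<forall>t1 t2 \<alpha> T \<beta>.
        let d = (SUP \<tau>\<in>{t1..t2}. 1 + (norm (\<phi> \<tau>))\<^sup>2);
            \<alpha>0 = k * d / (\<kappa> * \<Gamma>max * \<rho> * lam * exp (- lam * (t2 - t1)));
            \<Omega>FE = k / (\<kappa> * \<Gamma>max);
            t2' = t1 + T;
            d' = (SUP \<tau>\<in>{t1..}. 1 + (norm (\<phi> \<tau>))\<^sup>2);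
            \<alpha>0' = \<alpha>0 * exp (- lam * (t2 - t2')) * d' / d
        in (bounded (\<phi> ` {t0..}) \<and> t0 \<le> t1 \<and> t1 < t2 \<and> \<alpha> \<ge> \<alpha>0
            \<and> loewner_le (\<alpha> *\<^sub>R mat 1) (integral {t1..t2} (\<lambda>\<tau>. outer_self (\<phi> \<tau>)))
            \<and> T > 0 \<and> \<beta> \<ge> \<alpha>0'
            \<and> (\<forall>t\<ge>t1. loewner_le (\<beta> *\<^sub>R mat 1) (integral {t..t+T} (\<lambda>\<tau>. outer_self (\<phi> \<tau>)))))
           \<longrightarrow> (\<forall>t\<ge>t2'. loewner_le (\<Omega>FE *\<^sub>R mat 1) (\<Omega> t)
                 \<and> loewner_less ((1 / (\<kappa> * \<Gamma>max)) *\<^sub>R mat 1) (\<Omega>FE *\<^sub>R mat 1)))"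
proof -
  interpret regressor_filter \<phi> \<Omega> lam t0
    using lam ode by unfold_locales
  define c where "c = k / (\<kappa> * \<Gamma>max)"
  have "0 < \<kappa> * \<Gamma>max"
    using kappa_Gamma by simp
  then have "0 < c" and c_gt: "loewner_less ((1 / (\<kappa> * \<Gamma>max)) *\<^sub>R mat 1) (c *\<^sub>R mat 1)"
    using k by (auto simp: c_def intro!: loewner_less_scaleR_mat_1 divide_strict_right_mono)
  have threshold: "k * d / (\<kappa> * \<Gamma>max * \<rho> * lam * E) = c * d / (\<rho> * lam * E)" for d E
    by (simp add: c_def)
  have d_ge_1: "1 \<le> (SUP \<tau>\<in>{t1..t2}. 1 + (norm (\<phi> \<tau>))\<^sup>2)"
    if "bounded (\<phi> ` {t0..})" "t0 \<le> t1" "t1 < t2" for t1 t2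
    using that by (intro one_le_SUP_one_plus_norm_sq[of \<phi> "{t0..}"]) auto
  have persistent_threshold:
    "c * d / (\<rho> * lam * exp (- lam * (t2 - t1))) * exp (- lam * (t2 - (t1 + T))) * d' / d
      = c * d' * exp (lam * T) / (\<rho> * lam)" if "1 \<le> d" for d d' t1 t2 T
  proof -
    have "exp (- lam * (t2 - (t1 + T))) = exp (- lam * (t2 - t1)) * exp (lam * T)"
      by (simp add: algebra_simps flip: exp_add)
    then show ?thesis
      using that by (simp add: field_simps)
  qed
  note bounds = c_gt d_ge_1 persistent_threshold Omega_psd[OF psd0] Omega_le_mat_1[OF leI0]
    Omega_ge_after_excitation[OF psd0 _ _ _ \<open>0 < c\<close> rho(1)]
    Omega_ge_persistent_excitation[OF psd0 _ _ _ \<open>0 < c\<close> rho(1) less_imp_le[OF rho(2)]]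
  show ?thesis
    unfolding Let_def threshold c_def[symmetric]
    by (intro conjI allI impI ballI; (elim conjE)?; metis bounds atLeastAtMost_iff)
qed

end
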